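(* Let $p\ge1$ be an integer and consider the $p$-Pass algorithm run with arbitrary orderings of $V$ in each pass. For every $1\le i\le p$, if $|S_i|<k$ then $f(S_i)\ge\big(1-(\tfrac{p}{p+1})^i\big)\mathrm{OPT}$.
   Context: $V$ is a finite ground set with $|V|=n$; $f:2^V\to\mathbb{R}_{\ge0}$ is monotone, submodular and normalized; $f(e\mid Y)=f(Y\cup\{e\})-f(Y)$. $k\le n$ is a positive integer and $\mathrm{OPT}=\max\{f(S):S\subseteq V,|S|\le k\}$. $p$-Pass algorithm (knows $\mathrm{OPT}$): start with $S=\emptyset$; for $i=1,\dots,p$, make a pass over all elements of $V$ (in some order) and add each element $e$ to $S$ if $|S|<k$ and $f(e\mid S)\ge(\frac{p}{p+1})^i\cdot\frac{\mathrm{OPT}}{k}$; return $S$. $S_i$ denotes the set $S$ after the $i$-th pass ($S_0=\emptyset$) and $k_i=|S_i\setminus S_{i-1}|$. *)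

theory Defs
  imports Complex_Main
begin

definition monotone_set_fun :: "'a set \<Rightarrow> ('a set \<Rightarrow> real) \<Rightarrow> bool" where
  "monotone_set_fun V f \<longleftrightarrow> (\<forall>A B. A \<subseteq> B \<and> B \<subseteq> V \<longrightarrow> f A \<le> f B)"

definition submodular :: "'a set \<Rightarrow> ('a set \<Rightarrow> real) \<Rightarrow> bool" where
  "submodular V f \<longleftrightarrow>
     (\<forall>A B. A \<subseteq> V \<and> B \<subseteq> V \<longrightarrow> f (A \<union> B) + f (A \<inter> B) \<le> f A + f B)"

definition normalized :: "('a set \<Rightarrow> real) \<Rightarrow> bool" where
  "normalized f \<longleftrightarrow> f {} = 0"

definition marginal :: "('a set \<Rightarrow> real) \<Rightarrow> 'a \<Rightarrow> 'a set \<Rightarrow> real" where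
  "marginal f e Y = f (Y \<union> {e}) - f Y"

definition OPT :: "'a set \<Rightarrow> ('a set \<Rightarrow> real) \<Rightarrow> nat \<Rightarrow> real" where
  "OPT V f k = Max {f S | S. S \<subseteq> V \<and> card S \<le> k}"

primrec run_pass :: "('a set \<Rightarrow> real) \<Rightarrow> nat \<Rightarrow> real \<Rightarrow> 'a list \<Rightarrow> 'a set \<Rightarrow> 'a set" where
  "run_pass f k tau [] S = S"
| "run_pass f k tau (e # es) S =
     run_pass f k tau es (if card S < k \<and> marginal f e S \<ge> tau then insert e S else S)"

primrec pass_set :: "('a set \<Rightarrow> real) \<Rightarrow> nat \<Rightarrow> real \<Rightarrow> nat \<Rightarrow> (nat \<Rightarrow> 'a list) \<Rightarrow> nat \<Rightarrow> 'a set" where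
  "pass_set f k opt p ord 0 = {}"
| "pass_set f k opt p ord (Suc i) =
     run_pass f k ((real p / (real p + 1)) ^ Suc i * opt / real k) (ord (Suc i))
       (pass_set f k opt p ord i)"

end

theory Submission
  imports Defs
begin

text \<open>If pass \<open>i\<close> ends with fewer than \<open>k\<close> elements, the cardinality constraint never blocked it,
  so every element outside \<open>S\<^sub>i\<close> was rejected for having marginal gain below the threshold
  \<open>\<tau> = (p/(p+1))\<^sup>i OPT/k\<close> at the moment it was scanned; by diminishing returns its gain with respect
  to the larger final set \<open>S\<^sub>i\<close> is below \<open>\<tau>\<close> as well. Adding an optimal set \<open>O\<close> to \<open>S\<^sub>i\<close> then gives
  \<open>OPT \<le> f(O \<union> S\<^sub>i) \<le> f(S\<^sub>i) + |O| \<tau> \<le> f(S\<^sub>i) + (p/(p+1))\<^sup>i OPT\<close>.\<close>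

lemma marginal_of_mem: "e \<in> S \<Longrightarrow> marginal f e S = 0"
  unfolding marginal_def by (simp add: insert_absorb)

lemma marginal_antimono:
  assumes mono: "monotone_set_fun V f" and sub: "submodular V f"
    and "A \<subseteq> B" "B \<subseteq> V" "e \<in> V"
  shows "marginal f e B \<le> marginal f e A"
proof (cases "e \<in> B")
  case True
  have "f A \<le> f (A \<union> {e})"
    using mono assms(4,5) \<open>A \<subseteq> B\<close> unfolding monotone_set_fun_def by blast
  then show ?thesis using True unfolding marginal_def by (simp add: insert_absorb)
next
  case False
  have "A \<union> {e} \<subseteq> V" using assms(3-5) by auto
  then have "f ((A \<union> {e}) \<union> B) + f ((A \<union> {e}) \<inter> B) \<le> f (A \<union> {e}) + f B"
    using sub \<open>B \<subseteq> V\<close> unfolding submodular_def by blast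
  moreover have "(A \<union> {e}) \<union> B = B \<union> {e}" "(A \<union> {e}) \<inter> B = A"
    using \<open>A \<subseteq> B\<close> False by auto
  ultimately show ?thesis unfolding marginal_def by simp
qed

lemma sum_marginal_bound:
  assumes mono: "monotone_set_fun V f" and sub: "submodular V f"
    and "S \<subseteq> V" "finite U" "U \<subseteq> V"
  shows "f (U \<union> S) \<le> f S + (\<Sum>e\<in>U. marginal f e S)"
  using \<open>finite U\<close> \<open>U \<subseteq> V\<close>
proof (induction U rule: finite_induct)
  case empty
  then show ?case by simp
next
  case (insert x F)
  have "marginal f x (F \<union> S) \<le> marginal f x S"
    using marginal_antimono[OF mono sub, of S "F \<union> S" x] insert.prems \<open>S \<subseteq> V\<close> by auto
  moreover have "f (insert x F \<union> S) = f (F \<union> S) + marginal f x (F \<union> S)"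
    unfolding marginal_def by (simp add: insert_commute)
  ultimately show ?case using insert by simp
qed

lemma finite_feasible_values:
  assumes "finite V"
  shows "finite {f S | S. S \<subseteq> V \<and> card S \<le> k}"
proof (rule finite_subset)
  show "{f S | S. S \<subseteq> V \<and> card S \<le> k} \<subseteq> f ` Pow V" by auto
qed (use assms in simp)

lemma OPT_attained:
  assumes "finite V"
  obtains U where "U \<subseteq> V" "card U \<le> k" "f U = OPT V f k"
proof -
  let ?M = "{f S | S. S \<subseteq> V \<and> card S \<le> k}"
  have "finite ?M" using finite_feasible_values[OF \<open>finite V\<close>] .
  moreover have "f {} \<in> ?M" by auto
  ultimately have "Max ?M \<in> ?M" by (intro Max_in) auto
  then show thesis using that unfolding OPT_def by auto
qed

lemma OPT_nonneg:
  assumes "finite V" "normalized f"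
  shows "0 \<le> OPT V f k"
proof -
  let ?M = "{f S | S. S \<subseteq> V \<and> card S \<le> k}"
  have "finite ?M" using finite_feasible_values[OF \<open>finite V\<close>] .
  moreover have "f {} \<in> ?M" by auto
  ultimately have "f {} \<le> Max ?M" by (rule Max_ge)
  then show ?thesis using \<open>normalized f\<close> unfolding normalized_def OPT_def by simp
qed

lemma OPT_le_of_marginals_le:
  assumes fin: "finite V" and mono: "monotone_set_fun V f" and sub: "submodular V f"
    and "T \<subseteq> V" and gain: "\<forall>e\<in>V. marginal f e T \<le> tau" and "0 \<le> tau"
  shows "OPT V f k \<le> f T + real k * tau"
proof -
  obtain U where U: "U \<subseteq> V" "card U \<le> k" "f U = OPT V f k"
    using OPT_attained[OF fin] .
  have "finite U" using U(1) fin finite_subset by blast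
  have "OPT V f k \<le> f (U \<union> T)"
    using mono U(1,3) \<open>T \<subseteq> V\<close> unfolding monotone_set_fun_def by (metis Un_subset_iff sup_ge1)
  also have "\<dots> \<le> f T + (\<Sum>e\<in>U. marginal f e T)"
    using sum_marginal_bound[OF mono sub \<open>T \<subseteq> V\<close> \<open>finite U\<close> U(1)] .
  also have "(\<Sum>e\<in>U. marginal f e T) \<le> real (card U) * tau"
    using sum_mono[of U "\<lambda>e. marginal f e T" "\<lambda>_. tau"] gain U(1) by auto
  also have "\<dots> \<le> real k * tau" using U(2) \<open>0 \<le> tau\<close> by (simp add: mult_right_mono)
  finally show ?thesis by simp
qed

lemma run_pass_incr: "S \<subseteq> run_pass f k tau es S"
proof (induction es arbitrary: S)
  case (Cons e es)
  then show ?case by (simp del: insert_subset) (meson subset_insertI subset_trans)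
qed simp

lemma run_pass_subset: "set es \<subseteq> V \<Longrightarrow> S \<subseteq> V \<Longrightarrow> run_pass f k tau es S \<subseteq> V"
  by (induction es arbitrary: S) auto

lemma run_pass_rejected:
  assumes fin: "finite V" and mono: "monotone_set_fun V f" and sub: "submodular V f"
  shows "set es \<subseteq> V \<Longrightarrow> S \<subseteq> V \<Longrightarrow> card (run_pass f k tau es S) < k \<Longrightarrow> e \<in> set es \<Longrightarrow>
    e \<notin> run_pass f k tau es S \<Longrightarrow> marginal f e (run_pass f k tau es S) < tau"
proof (induction es arbitrary: S)
  case Nil
  then show ?case by simp
next
  case (Cons x es)
  define S' where "S' = (if card S < k \<and> marginal f x S \<ge> tau then insert x S else S)"
  define T where "T = run_pass f k tau es S'"
  have T_eq: "run_pass f k tau (x # es) S = T" unfolding T_def S'_def by simp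
  have "S' \<subseteq> V" "S \<subseteq> S'" using Cons.prems unfolding S'_def by auto
  have "S' \<subseteq> T" unfolding T_def by (rule run_pass_incr)
  have "T \<subseteq> V" unfolding T_def using run_pass_subset[of es V S'] Cons.prems(1) \<open>S' \<subseteq> V\<close> by simp
  show ?case
  proof (cases "e = x")
    case True
    have "card S \<le> card T"
      using \<open>S \<subseteq> S'\<close> \<open>S' \<subseteq> T\<close> \<open>T \<subseteq> V\<close> fin by (meson card_mono finite_subset order_trans)
    then have "\<not> marginal f x S \<ge> tau"
      using Cons.prems(3,5) \<open>S' \<subseteq> T\<close> True unfolding T_eq S'_def by auto
    moreover have "marginal f x T \<le> marginal f x S"
      using marginal_antimono[OF mono sub] \<open>S \<subseteq> S'\<close> \<open>S' \<subseteq> T\<close> \<open>T \<subseteq> V\<close> Cons.prems(1) by auto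
    ultimately show ?thesis using True T_eq by simp
  next
    case False
    then show ?thesis
      using Cons.IH[OF _ \<open>S' \<subseteq> V\<close>] Cons.prems unfolding T_eq T_def by auto
  qed
qed

lemma pass_set_subset:
  assumes "\<forall>j\<in>{1..p}. set (ord j) = V"
  shows "j \<le> p \<Longrightarrow> pass_set f k opt p ord j \<subseteq> V"
proof (induction j)
  case (Suc j)
  then have "set (ord (Suc j)) = V" using assms by simp
  with Suc show ?case by (simp add: run_pass_subset)
qed simp

theorem mainTheorem17:
  fixes V :: "'a set" and f :: "'a set \<Rightarrow> real" and k p :: nat
    and ord :: "nat \<Rightarrow> 'a list"
  assumes "finite V"
    and "\<forall>S\<subseteq>V. f S \<ge> 0"
    and "monotone_set_fun V f" and "submodular V f" and "normalized f"
    and "0 < k" and "k \<le> card V"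
    and "1 \<le> p"
    and "\<forall>j\<in>{1..p}. distinct (ord j) \<and> set (ord j) = V"
    and "1 \<le> i" and "i \<le> p"
    and "card (pass_set f k (OPT V f k) p ord i) < k"
  shows "f (pass_set f k (OPT V f k) p ord i) \<ge> (1 - (real p / (real p + 1)) ^ i) * OPT V f k"
proof -
  define q where "q = (real p / (real p + 1)) ^ i"
  define tau where "tau = q * OPT V f k / real k"
  define T where "T = pass_set f k (OPT V f k) p ord i"
  obtain i' where i': "i = Suc i'" using \<open>1 \<le> i\<close> by (cases i) auto
  define S where "S = pass_set f k (OPT V f k) p ord i'"
  have T_eq: "T = run_pass f k tau (ord i) S" unfolding T_def S_def tau_def q_def i' by simp
  have ord_i: "set (ord i) = V" using assms(9-11) by auto
  have "S \<subseteq> V" unfolding S_def using pass_set_subset[of p ord V i'] assms(9,11) i' by simp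
  then have "T \<subseteq> V" using run_pass_subset[of "ord i" V S] ord_i T_eq by simp
  have "0 \<le> tau" unfolding tau_def q_def using OPT_nonneg[OF assms(1,5)] by simp
  have "\<forall>e\<in>V. marginal f e T \<le> tau"
    using run_pass_rejected[OF assms(1,3,4), of "ord i" S k tau] marginal_of_mem[of _ T f]
      \<open>S \<subseteq> V\<close> ord_i assms(12) \<open>0 \<le> tau\<close>
    unfolding T_eq T_def[symmetric] by (metis less_imp_le order_refl)
  then have "OPT V f k \<le> f T + real k * tau"
    using OPT_le_of_marginals_le[OF assms(1,3,4) \<open>T \<subseteq> V\<close>] \<open>0 \<le> tau\<close> by blast
  also have "real k * tau = q * OPT V f k" unfolding tau_def using \<open>0 < k\<close> by simp
  finally show ?thesis unfolding T_def q_def by (simp add: algebra_simps)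
qed

end
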